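(* Let $(X,d,\mu)$ be a metric measure space satisfying $\mathrm{BG}(k,n)$ with constant $C$ for some $k\in\mathbb{R}$, $n\ge1$, $C\ge1$. Then the Hausdorff dimension of $X$ satisfies $\dim_H(X)\le n$.
   Context: A metric measure space $(X,d,\mu)$ means a complete, locally compact length space $(X,d)$ equipped with a Borel measure $\mu$. $B_r(x)$ and $\overline B_r(x)$ denote the open and closed balls of radius $r$ about $x$. For $k\in\mathbb{R}$ let $\mathsf s_k(t)=\sin(\sqrt{k}\,t)/\sqrt{k}$ if $k>0$, $\mathsf s_k(t)=t$ if $k=0$, $\mathsf s_k(t)=\sinh(\sqrt{-k}\,t)/\sqrt{-k}$ if $k<0$. For real $n\ge1$ and $0\le r_1<r_2$ set $V_{k,n}(r_1,r_2)=\alpha_{n-1}\int_{r_1}^{r_2}\mathsf s_k(t)^{n-1}\,dt$ with $\alpha_{n-1}=2\pi^{n/2}/\Gamma(n/2)$. For $x\in X$ let $A_{r_1,r_2}(x)=B_{r_2}(x)\setminus\overline B_{r_1}(x)$ and $A_{0,r}(x)=B_r(x)$. For a measurable $U\subset A_{r_1,r_2}(x)$ and $0\le s_1<s_2$ with $s_1\le r_1$, $s_2\le r_2$, let $S_{s_1,s_2}(x,U)=\{y\in A_{s_1,s_2}(x): d(x,y)+d(y,z)=d(x,z)\text{ for some }z\in U\}$. $(X,d,\mu)$ satisfies $\mathrm{BG}(k,n)$ with constant $C\ge1$ if for every $x\in X$, all $0\le r_1<r_2$, $0\le s_1<s_2$ with $s_1\le r_1$, $s_2\le r_2$, and every measurable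 $U\subset A_{r_1,r_2}(x)$, one has $\mu(U)/\mu(S_{s_1,s_2}(x,U))\le C\,V_{k,n}(r_1,r_2)/V_{k,n}(s_1,s_2)$. *)

theory Defs
  imports "HOL-Analysis.Analysis"
begin

definition partition_sum :: "(real \<Rightarrow> 'a::metric_space) \<Rightarrow> (nat \<Rightarrow> real) \<Rightarrow> nat \<Rightarrow> real" where
  "partition_sum g t m = (\<Sum>i<m. dist (g (t i)) (g (t (Suc i))))"

definition curve_length :: "(real \<Rightarrow> 'a::metric_space) \<Rightarrow> ereal" where
  "curve_length g = (SUP (t, m) \<in> {(t, m). t 0 = 0 \<and> t m = 1 \<and> (\<forall>i<m. t i < t (Suc i))}.
      ereal (partition_sum g t m))"

definition length_space :: "'a::metric_space itself \<Rightarrow> bool" where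
  "length_space _ \<longleftrightarrow> (\<forall>x y :: 'a. ereal (dist x y) =
      (INF g \<in> {g. continuous_on {0..1} g \<and> g 0 = x \<and> g 1 = y}. curve_length g))"

text \<open>Metric measure space (X,d,mu) with X the whole type: complete, locally compact length space
  with a Borel measure mu, which is (as is standard for metric measure spaces) positive and finite on balls.\<close>
definition metric_measure_space :: "'a::metric_space measure \<Rightarrow> bool" where
  "metric_measure_space mu \<longleftrightarrow>
     complete (UNIV :: 'a set) \<and> locally_compact_space (euclidean :: 'a topology) \<and>
     length_space TYPE('a) \<and> sets mu = sets borel \<and>
     (\<forall>x r. r > 0 \<longrightarrow> 0 < emeasure mu (ball x r) \<and> emeasure mu (ball x r) < \<infinity>)"

definition sk :: "real \<Rightarrow> real \<Rightarrow> real" where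
  "sk k t = (if k > 0 then sin (sqrt k * t) / sqrt k
             else if k = 0 then t else sinh (sqrt (- k) * t) / sqrt (- k))"

definition alpha_const :: "real \<Rightarrow> real" where
  "alpha_const m = 2 * pi powr ((m + 1) / 2) / Gamma ((m + 1) / 2)"

definition Vkn :: "real \<Rightarrow> real \<Rightarrow> real \<Rightarrow> real \<Rightarrow> real" where
  "Vkn k n r1 r2 = alpha_const (n - 1) * integral {r1..r2} (\<lambda>t. sk k t powr (n - 1))"

definition annulus :: "'a::metric_space \<Rightarrow> real \<Rightarrow> real \<Rightarrow> 'a set" where
  "annulus x r1 r2 = (if r1 = 0 then ball x r2 else ball x r2 - cball x r1)"

definition Sset :: "'a::metric_space \<Rightarrow> real \<Rightarrow> real \<Rightarrow> 'a set \<Rightarrow> 'a set" where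
  "Sset x s1 s2 U = {y \<in> annulus x s1 s2. \<exists>z\<in>U. dist x y + dist y z = dist x z}"

text \<open>The measure of S (possibly not Borel) is its outer measure,
  which agrees with mu on measurable sets. For k > 0 radii are restricted to r2 \<le> pi/sqrt k,
  the range where the model volume is defined.\<close>
definition BG :: "'a::metric_space measure \<Rightarrow> real \<Rightarrow> real \<Rightarrow> real \<Rightarrow> bool" where
  "BG mu k n C \<longleftrightarrow>
     (\<forall>x r1 r2 s1 s2 U. 0 \<le> r1 \<and> r1 < r2 \<and> 0 \<le> s1 \<and> s1 < s2 \<and> s1 \<le> r1 \<and> s2 \<le> r2 \<and>
        (k > 0 \<longrightarrow> r2 \<le> pi / sqrt k) \<and>
        U \<in> sets mu \<and> U \<subseteq> annulus x r1 r2 \<longrightarrow>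
        emeasure mu U / outer_measure_of mu (Sset x s1 s2 U)
          \<le> ennreal (C * Vkn k n r1 r2 / Vkn k n s1 s2))"

definition diam_pow :: "real \<Rightarrow> 'a::metric_space set \<Rightarrow> real" where
  "diam_pow s A = (if A = {} then 0 else if s = 0 then 1 else diameter A powr s)"

definition hausdorff_pre :: "real \<Rightarrow> real \<Rightarrow> 'a::metric_space set \<Rightarrow> ennreal" where
  "hausdorff_pre s \<delta> A =
     (INF C \<in> {C :: nat \<Rightarrow> 'a set. A \<subseteq> (\<Union>i. C i) \<and> (\<forall>i. bounded (C i) \<and> diameter (C i) \<le> \<delta>)}.
        (\<Sum>i. ennreal (diam_pow s (C i))))"

definition hausdorff_measure :: "real \<Rightarrow> 'a::metric_space set \<Rightarrow> ennreal" where
  "hausdorff_measure s A = (SUP \<delta> \<in> {0<..}. hausdorff_pre s \<delta> A)"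

definition hausdorff_dim :: "'a::metric_space set \<Rightarrow> ereal" where
  "hausdorff_dim A = (INF s \<in> {s. 0 \<le> s \<and> hausdorff_measure s A = 0}. ereal s)"

end

theory Submission
  imports Defs
begin

(* Applying BG to the annulus U = B_R(z) minus the closed ball of radius r/2, with inner radii
   s1 = r/2 and s2 = r, and noting that S_{r/2,r}(z,U) lies in B_r(z), gives
   mu(B_R(z)) <= (1 + C V(r/2,R) / V(r/2,r)) mu(B_r(z)) for 0 < r <= R.  Since s_k(t) is comparable
   to t near 0, the ratio of model volumes is O(r^-n) for a fixed small R, so balls of radius r
   centred near a given point have measure at least c r^n.  A maximal r-separated subset of a small
   ball B therefore has O(r^-n) points, and the r-balls around them cover B; hence the s-dimensional
   Hausdorff content of B vanishes for every s > n.  Finally X has to be covered by countably many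
   such balls: a length space is connected, and in a connected space where every rho-ball is covered
   by finitely many rho/2-balls, the centres reachable from one point by finitely many such
   refinements form a countable set whose rho/2-balls cover everything. *)

lemma sin_ge_half_self:
  fixes x :: real
  assumes "0 \<le> x" "x \<le> 1"
  shows "x / 2 \<le> sin x"
proof -
  have "\<bar>sin x - x\<bar> \<le> x ^ 3 / 6"
    using Maclaurin_sin_bound[of x 3] assms by (simp add: sin_coeff_def numeral_3_eq_3)
  then have "x - x ^ 3 / 6 \<le> sin x"
    unfolding abs_le_iff by linarith
  moreover have "x ^ 3 \<le> x"
    using power_decreasing[of 1 3 x] assms by simp
  ultimately show ?thesis
    using assms by linarith
qed

lemma self_le_sinh:
  fixes x :: real
  assumes "0 \<le> x"
  shows "x \<le> sinh x"
proof -
  have "(\<lambda>u. sinh u - u) 0 \<le> (\<lambda>u. sinh u - u) x"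
  proof (rule DERIV_nonneg_imp_nondecreasing[OF assms])
    fix u :: real
    show "\<exists>y. ((\<lambda>u. sinh u - u) has_real_derivative y) (at u) \<and> 0 \<le> y"
      by (auto intro!: exI[of _ "cosh u - 1"] derivative_eq_intros simp: cosh_real_ge_1)
  qed
  then show ?thesis by simp
qed

lemma continuous_on_sk: "continuous_on A (sk k)"
  unfolding sk_def by (cases "k > 0"; cases "k = 0") (auto intro!: continuous_intros)

lemma sk_linear_bounds:
  obtains R a B where "0 < R" "k > 0 \<Longrightarrow> R \<le> pi / sqrt k" "0 < a"
    "\<And>t. 0 \<le> t \<Longrightarrow> t \<le> R \<Longrightarrow> a * t \<le> sk k t \<and> sk k t \<le> B"
proof (cases k "0 :: real" rule: linorder_cases)
  case less
  define c where "c = sqrt (- k)"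
  have c: "0 < c" and sk: "sk k t = sinh (c * t) / c" for t
    using less by (auto simp: sk_def c_def)
  have "1 * t \<le> sk k t \<and> sk k t \<le> sinh c / c" if "0 \<le> t" "t \<le> 1" for t
    using self_le_sinh[of "c * t"] c that by (simp add: sk field_simps mult_left_le)
  with less show ?thesis by (intro that[of 1 1]) auto
next
  case equal
  then show ?thesis by (intro that[of 1 1 1]) (auto simp: sk_def)
next
  case greater
  have sk: "sk k t = sin (sqrt k * t) / sqrt k" for t
    using greater by (simp add: sk_def)
  have "1/2 * t \<le> sk k t \<and> sk k t \<le> 1 / sqrt k" if "0 \<le> t" "t \<le> 1 / sqrt k" for t
    using sin_ge_half_self[of "sqrt k * t"] greater that
    by (auto simp: sk field_simps divide_right_mono)
  moreover have "1 / sqrt k \<le> pi / sqrt k"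
    using greater pi_gt3 by (simp add: divide_right_mono)
  ultimately show ?thesis
    using greater by (intro that[of "1 / sqrt k" "1/2" "1 / sqrt k"]) auto
qed

lemma integral_powr_bounds:
  fixes f :: "real \<Rightarrow> real"
  assumes f: "continuous_on {u..v} f" and "u \<le> v" "0 < lo"
    and bounds: "\<And>t. t \<in> {u..v} \<Longrightarrow> lo \<le> f t \<and> f t \<le> hi" and "0 \<le> e"
  shows "(v - u) * lo powr e \<le> integral {u..v} (\<lambda>t. f t powr e)"
    and "integral {u..v} (\<lambda>t. f t powr e) \<le> (v - u) * hi powr e"
proof -
  have pos: "0 < f t" if "t \<in> {u..v}" for t
    using bounds[OF that] \<open>0 < lo\<close> by linarith
  have int: "(\<lambda>t. f t powr e) integrable_on {u..v}"
    using pos by (force intro!: integrable_continuous_interval continuous_intros f)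
  have "integral {u..v} (\<lambda>_. lo powr e) \<le> integral {u..v} (\<lambda>t. f t powr e)"
    using assms by (intro integral_le int) (auto intro!: powr_mono2)
  then show "(v - u) * lo powr e \<le> integral {u..v} (\<lambda>t. f t powr e)"
    using \<open>u \<le> v\<close> by simp
  have "f t powr e \<le> hi powr e" if "t \<in> {u..v}" for t
    using bounds[OF that] pos[OF that] \<open>0 \<le> e\<close> by (intro powr_mono2) auto
  then have "integral {u..v} (\<lambda>t. f t powr e) \<le> integral {u..v} (\<lambda>_. hi powr e)"
    by (intro integral_le int) auto
  then show "integral {u..v} (\<lambda>t. f t powr e) \<le> (v - u) * hi powr e"
    using \<open>u \<le> v\<close> by simp
qed

lemma alpha_const_pos: "1 \<le> n \<Longrightarrow> 0 < alpha_const (n - 1)"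
  unfolding alpha_const_def by auto

lemma Vkn_bounds:
  assumes "1 \<le> n" "u \<le> v" "0 < lo" "\<And>t. t \<in> {u..v} \<Longrightarrow> lo \<le> sk k t \<and> sk k t \<le> hi"
  shows "alpha_const (n - 1) * ((v - u) * lo powr (n - 1)) \<le> Vkn k n u v"
    and "Vkn k n u v \<le> alpha_const (n - 1) * ((v - u) * hi powr (n - 1))"
  using integral_powr_bounds[OF continuous_on_sk assms(2-4), of "n - 1"] alpha_const_pos[OF assms(1)]
    assms(1)
  by (auto simp: Vkn_def intro!: mult_left_mono)

lemma Vkn_ratio_le:
  assumes "1 \<le> n"
  obtains R K where "0 < R" "k > 0 \<Longrightarrow> R \<le> pi / sqrt k" "0 \<le> K"
    "\<And>r. 0 < r \<Longrightarrow> r \<le> R \<Longrightarrow> Vkn k n (r/2) R / Vkn k n (r/2) r \<le> K / r powr n"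
proof -
  obtain R a B where R: "0 < R" "k > 0 \<Longrightarrow> R \<le> pi / sqrt k" and a: "0 < a"
    and sk: "\<And>t. 0 \<le> t \<Longrightarrow> t \<le> R \<Longrightarrow> a * t \<le> sk k t \<and> sk k t \<le> B"
    using sk_linear_bounds[of k] by blast
  define al where "al = alpha_const (n - 1)"
  have al: "0 < al"
    using alpha_const_pos[OF assms] by (simp add: al_def)
  have B: "0 < B"
    using sk[of R] mult_pos_pos[OF a R(1)] R(1) by linarith
  define K where "K = 2 * R * B powr (n - 1) / (a/2) powr (n - 1)"
  have "Vkn k n (r/2) R / Vkn k n (r/2) r \<le> K / r powr n" if r: "0 < r" "r \<le> R" for r
  proof -
    have sk_r: "a * (r/2) \<le> sk k t \<and> sk k t \<le> B" if "t \<in> {r/2..R}" for t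
      using sk[of t] that r a by (auto intro: order_trans[OF mult_left_mono])
    define D where "D = (r/2) * (a * (r/2)) powr (n - 1)"
    have D: "0 < D"
      using r a by (simp add: D_def)
    have low: "al * D \<le> Vkn k n (r/2) r"
      using Vkn_bounds(1)[OF assms, where u = "r/2" and v = r and lo = "a * (r/2)" and hi = B and k = k]
        sk_r r a by (auto simp: al_def D_def)
    have "Vkn k n (r/2) R \<le> al * ((R - r/2) * B powr (n - 1))"
      using Vkn_bounds(2)[OF assms, where u = "r/2" and v = R and lo = "a * (r/2)" and hi = B and k = k]
        sk_r r a by (auto simp: al_def)
    also have "\<dots> \<le> al * (R * B powr (n - 1))"
      using al r by (intro mult_left_mono mult_right_mono) auto
    finally have up: "Vkn k n (r/2) R \<le> al * (R * B powr (n - 1))" .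
    have "Vkn k n (r/2) R / Vkn k n (r/2) r \<le> al * (R * B powr (n - 1)) / (al * D)"
      using low up al D B R by (intro frac_le) auto
    also have "\<dots> = K / r powr n"
    proof -
      have "(a * (r/2)) powr (n - 1) = (a/2) powr (n - 1) * r powr (n - 1)"
        using r a by (simp add: powr_mult[symmetric])
      moreover have "r * r powr (n - 1) = r powr n"
        using powr_mult_base[of r "n - 1"] r by simp
      ultimately show ?thesis
        using al a r by (simp add: K_def D_def field_simps)
    qed
    finally show ?thesis .
  qed
  moreover have "0 \<le> K"
    using R B a by (simp add: K_def)
  ultimately show ?thesis
    using R that by blast
qed

lemma metric_measure_space_sets_eq:
  "metric_measure_space mu \<Longrightarrow> sets mu = sets borel"
  by (simp add: metric_measure_space_def)

lemma metric_measure_space_emeasure_ball_finite: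
  assumes "metric_measure_space mu"
  shows "emeasure mu (ball x r) < \<infinity>"
proof (cases "0 < r")
  case False
  then show ?thesis by (simp add: ball_empty)
qed (use assms in \<open>simp add: metric_measure_space_def\<close>)

lemma metric_measure_space_measure_ball_pos:
  assumes "metric_measure_space mu" "0 < r"
  shows "0 < measure mu (ball x r)"
proof -
  have "0 < emeasure mu (ball x r)"
    using assms by (simp add: metric_measure_space_def)
  then show ?thesis
    using metric_measure_space_emeasure_ball_finite[OF assms(1), of x r]
    by (simp add: emeasure_eq_ennreal_measure)
qed

(* c is real because in ennreal a / 0 = \<infinity> for a \<noteq> 0, while \<infinity> * 0 = 0. *)
lemma ennreal_le_mult_of_divide_le:
  fixes a b m :: ennreal
  assumes "a / b \<le> ennreal c" "b \<le> m" "m < \<infinity>"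
  shows "a \<le> ennreal c * m"
proof (cases "b = 0")
  case True
  then show ?thesis
    using assms(1) by (auto split: if_splits simp: top_unique)
next
  case False
  then have "a = (a / b) * b"
    using assms by (simp add: ennreal_divide_times)
  also have "\<dots> \<le> c * m"
    using assms by (intro mult_mono) auto
  finally show ?thesis .
qed

lemma BG_measure_ball_le:
  assumes mms: "metric_measure_space mu" and bg: "BG mu k n C"
    and r: "0 < r" "r \<le> R" and R: "k > 0 \<Longrightarrow> R \<le> pi / sqrt k"
    and q: "C * Vkn k n (r/2) R / Vkn k n (r/2) r \<le> q" "0 \<le> q"
  shows "measure mu (ball z R) \<le> (1 + q) * measure mu (ball z r)"
proof -
  note sets = metric_measure_space_sets_eq[OF mms]
  note finite = metric_measure_space_emeasure_ball_finite[OF mms]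
  define U where "U = ball z R - cball z (r/2)"
  have U: "U \<in> sets mu" "annulus z (r/2) R = U"
    using r by (auto simp: U_def annulus_def sets)
  have "Sset z (r/2) r U \<subseteq> ball z r"
    using r by (auto simp: Sset_def annulus_def)
  then have "outer_measure_of mu (Sset z (r/2) r U) \<le> emeasure mu (ball z r)"
    using outer_measure_of_mono[of "Sset z (r/2) r U" "ball z r" mu] by (simp add: sets)
  moreover have "emeasure mu U / outer_measure_of mu (Sset z (r/2) r U) \<le> ennreal q"
    using bg[unfolded BG_def, rule_format, of "r/2" R "r/2" r U z] r R U q(1)
    by (auto intro: order_trans ennreal_leI)
  ultimately have "emeasure mu U \<le> ennreal q * emeasure mu (ball z r)"
    using ennreal_le_mult_of_divide_le finite by blast
  then have "measure mu U \<le> enn2real (ennreal q * emeasure mu (ball z r))"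
    unfolding measure_def using finite by (intro enn2real_mono) (auto simp: ennreal_mult_less_top)
  then have U_le: "measure mu U \<le> q * measure mu (ball z r)"
    using q(2) by (simp add: enn2real_mult measure_def)
  have "ball z R = U \<union> ball z r"
    using r by (auto simp: U_def)
  then have "measure mu (ball z R) \<le> measure mu U + measure mu (ball z r)"
    using U by (simp add: measure_Un_le sets)
  then show ?thesis
    using U_le by (simp add: algebra_simps)
qed

lemma BG_volume_comparison:
  assumes mms: "metric_measure_space mu" and bg: "BG mu k n C" and "1 \<le> n" "0 \<le> C"
  obtains R K where "0 < R" "0 < K"
    "\<And>z r. 0 < r \<Longrightarrow> r \<le> R \<Longrightarrow> measure mu (ball z R) * r powr n \<le> K * measure mu (ball z r)"
proof -
  obtain R K\<^sub>V where R: "0 < R" "k > 0 \<Longrightarrow> R \<le> pi / sqrt k" and "0 \<le> K\<^sub>V"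
    and ratio: "\<And>r. 0 < r \<Longrightarrow> r \<le> R \<Longrightarrow> Vkn k n (r/2) R / Vkn k n (r/2) r \<le> K\<^sub>V / r powr n"
    using Vkn_ratio_le[OF \<open>1 \<le> n\<close>, of k] by blast
  define K where "K = C * K\<^sub>V + R powr n"
  have "measure mu (ball z R) * r powr n \<le> K * measure mu (ball z r)" if r: "0 < r" "r \<le> R" for z r
  proof -
    define q where "q = C * K\<^sub>V / r powr n"
    have "C * Vkn k n (r/2) R / Vkn k n (r/2) r \<le> q"
      using mult_left_mono[OF ratio[OF r] \<open>0 \<le> C\<close>] by (simp add: q_def)
    moreover have "0 \<le> q"
      using \<open>0 \<le> K\<^sub>V\<close> \<open>0 \<le> C\<close> by (simp add: q_def)
    ultimately have "measure mu (ball z R) \<le> (1 + q) * measure mu (ball z r)"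
      using BG_measure_ball_le[OF mms bg r R(2)] by simp
    then have "measure mu (ball z R) * r powr n \<le> (r powr n + C * K\<^sub>V) * measure mu (ball z r)"
      using r by (simp add: q_def field_simps mult_right_mono)
    also have "\<dots> \<le> K * measure mu (ball z r)"
      using r \<open>1 \<le> n\<close> by (intro mult_right_mono) (auto simp: K_def powr_mono2)
    finally show ?thesis .
  qed
  moreover have "0 < K"
    using R \<open>0 \<le> K\<^sub>V\<close> \<open>0 \<le> C\<close> by (simp add: K_def add_nonneg_pos)
  ultimately show ?thesis
    using R that by blast
qed

definition lower_volume_growth :: "'a::metric_space measure \<Rightarrow> real \<Rightarrow> real \<Rightarrow> real \<Rightarrow> 'a \<Rightarrow> bool"
  where "lower_volume_growth mu n \<rho> c y \<longleftrightarrow>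
    (\<forall>z\<in>ball y \<rho>. \<forall>r. 0 < r \<longrightarrow> r \<le> \<rho> \<longrightarrow> c * r powr n \<le> measure mu (ball z r))"

lemma BG_local_volume_lower_bound:
  assumes mms: "metric_measure_space mu" and bg: "BG mu k n C" and "1 \<le> n" "0 \<le> C"
  obtains \<rho> where "0 < \<rho>" "\<And>y. \<exists>c>0. lower_volume_growth mu n \<rho> c y"
proof -
  obtain R K where "0 < R" "0 < K"
    and comparison: "\<And>z r. 0 < r \<Longrightarrow> r \<le> R \<Longrightarrow>
      measure mu (ball z R) * r powr n \<le> K * measure mu (ball z r)"
    using BG_volume_comparison[OF assms] by blast
  have "\<exists>c>0. lower_volume_growth mu n (R/2) c y" for y
    unfolding lower_volume_growth_def
  proof (intro exI conjI ballI allI impI)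
    define m where "m = measure mu (ball y (R/2))"
    show "0 < m / K"
      using metric_measure_space_measure_ball_pos[OF mms] \<open>0 < R\<close> \<open>0 < K\<close> by (simp add: m_def)
    fix z r
    assume z: "z \<in> ball y (R/2)" and r: "0 < r" "r \<le> R/2"
    have "ball y (R/2) \<subseteq> ball z R"
      using z by (auto simp: subset_eq) metric
    then have "m \<le> measure mu (ball z R)"
      unfolding m_def using metric_measure_space_emeasure_ball_finite[OF mms]
      by (intro measure_mono_fmeasurable) (auto simp: fmeasurable_def metric_measure_space_sets_eq[OF mms])
    then have "m * r powr n \<le> measure mu (ball z R) * r powr n"
      by (intro mult_right_mono) auto
    also have "\<dots> \<le> K * measure mu (ball z r)"
      using comparison r by simp
    finally show "m / K * r powr n \<le> measure mu (ball z r)"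
      using \<open>0 < K\<close> by (simp add: field_simps)
  qed
  then show ?thesis
    using \<open>0 < R\<close> by (intro that[of "R/2"]) auto
qed

lemma separated_card_mult_le_measure:
  fixes mu :: "'a::metric_space measure"
  assumes sets: "sets mu = sets borel" and "finite S"
    and separated: "pairwise (\<lambda>s t. r \<le> dist s t) S"
    and lower: "\<And>s. s \<in> S \<Longrightarrow> L \<le> measure mu (ball s (r/2))"
    and E: "(\<Union>s\<in>S. ball s (r/2)) \<subseteq> E" "E \<in> fmeasurable mu"
  shows "real (card S) * L \<le> measure mu E"
proof -
  have "disjoint_family_on (\<lambda>s. ball s (r/2)) S"
    unfolding disjoint_family_on_def
  proof (intro ballI impI)
    fix s t
    assume "s \<in> S" "t \<in> S" "s \<noteq> t"
    with separated have "r \<le> dist s t"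
      by (simp add: pairwise_def)
    then show "ball s (r/2) \<inter> ball t (r/2) = {}"
      by (auto simp: disjoint_iff) metric
  qed
  moreover have "emeasure mu (ball s (r/2)) \<noteq> \<infinity>" if "s \<in> S" for s
  proof -
    have "emeasure mu (ball s (r/2)) \<le> emeasure mu E"
      using E that by (intro emeasure_mono) auto
    then show ?thesis
      using E by (auto simp: fmeasurable_def top_unique)
  qed
  ultimately have "(\<Sum>s\<in>S. measure mu (ball s (r/2))) = measure mu (\<Union>s\<in>S. ball s (r/2))"
    using \<open>finite S\<close> by (intro measure_finite_Union[symmetric]) (auto simp: sets)
  also have "\<dots> \<le> measure mu E"
    using E by (intro measure_mono_fmeasurable) (auto simp: sets intro!: borel_open)
  finally show ?thesis
    using sum_bounded_below[of S L "\<lambda>s. measure mu (ball s (r/2))"] lower by simp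
qed

lemma separated_ball_cover_of_card_bound:
  fixes A :: "'a::metric_space set"
  assumes "0 < r"
    and card_bound: "\<And>S. finite S \<Longrightarrow> S \<subseteq> A \<Longrightarrow> pairwise (\<lambda>s t. r \<le> dist s t) S \<Longrightarrow> card S \<le> N"
  obtains S where "finite S" "S \<subseteq> A" "pairwise (\<lambda>s t. r \<le> dist s t) S" "A \<subseteq> (\<Union>s\<in>S. ball s r)"
proof -
  define separated where "separated S \<longleftrightarrow> finite S \<and> S \<subseteq> A \<and> pairwise (\<lambda>s t. r \<le> dist s t) S"
    for S
  have "\<forall>S. separated S \<longrightarrow> card S < Suc N" and "separated {}"
    using card_bound by (auto simp: separated_def less_Suc_eq_le)
  then obtain S where S: "separated S" and maximal: "\<And>S'. separated S' \<Longrightarrow> card S' \<le> card S"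
    using ex_has_greatest_nat[of separated "{}" card] by blast
  have "A \<subseteq> (\<Union>s\<in>S. ball s r)"
  proof
    fix w
    assume "w \<in> A"
    show "w \<in> (\<Union>s\<in>S. ball s r)"
    proof (rule ccontr)
      assume "w \<notin> (\<Union>s\<in>S. ball s r)"
      then have far: "\<forall>s\<in>S. r \<le> dist s w"
        by (auto simp: not_less)
      with \<open>0 < r\<close> have "w \<notin> S"
        by force
      have "separated (insert w S)"
        using S \<open>w \<in> A\<close> far by (auto simp: separated_def pairwise_insert dist_commute)
      then have "card (insert w S) \<le> card S"
        by (rule maximal)
      with \<open>w \<notin> S\<close> S show False
        by (simp add: separated_def)
    qed
  qed
  with S show ?thesis
    using that by (auto simp: separated_def)
qed

lemma finite_ball_cover_of_measure_lower_bound: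
  fixes mu :: "'a::metric_space measure"
  assumes sets: "sets mu = sets borel" and finite: "emeasure mu (ball y (2 * \<rho>)) < \<infinity>"
    and lower: "\<And>z. z \<in> ball y \<rho> \<Longrightarrow> L \<le> measure mu (ball z (r/2))"
    and "0 < L" "0 < r" "r \<le> 2 * \<rho>"
  obtains S where "finite S" "ball y \<rho> \<subseteq> (\<Union>x\<in>S. ball x r)"
    "real (card S) * L \<le> measure mu (ball y (2 * \<rho>))"
proof -
  define M where "M = measure mu (ball y (2 * \<rho>))"
  have packing: "real (card S) * L \<le> M"
    if "finite S" "S \<subseteq> ball y \<rho>" "pairwise (\<lambda>s t. r \<le> dist s t) S" for S
    unfolding M_def
  proof (rule separated_card_mult_le_measure[OF sets that(1,3)])
    show "(\<Union>s\<in>S. ball s (r/2)) \<subseteq> ball y (2 * \<rho>)"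
      using that(2) \<open>r \<le> 2 * \<rho>\<close> by (auto simp: subset_eq) metric
  qed (use that lower finite in \<open>auto simp: fmeasurable_def sets\<close>)
  have card_bound: "card S \<le> nat \<lceil>M / L\<rceil>"
    if "finite S" "S \<subseteq> ball y \<rho>" "pairwise (\<lambda>s t. r \<le> dist s t) S" for S
  proof -
    have "real (card S) \<le> M / L"
      using packing[OF that] \<open>0 < L\<close> by (simp add: field_simps)
    then show ?thesis
      by linarith
  qed
  obtain S where "finite S" "S \<subseteq> ball y \<rho>" "pairwise (\<lambda>s t. r \<le> dist s t) S"
    "ball y \<rho> \<subseteq> (\<Union>s\<in>S. ball s r)"
    by (rule separated_ball_cover_of_card_bound[OF \<open>0 < r\<close> card_bound])
  with packing show ?thesis
    using that unfolding M_def by blast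
qed

lemma diameter_ball_le:
  fixes x :: "'a::metric_space"
  assumes "0 \<le> r"
  shows "diameter (ball x r) \<le> 2 * r"
  unfolding diameter_def using assms
  by (auto intro!: cSUP_least) metric

lemma hausdorff_pre_le_finite_ball_cover:
  fixes S :: "'a::metric_space set"
  assumes "finite S" and cover: "A \<subseteq> (\<Union>x\<in>S. ball x r)" and "0 < r" "2 * r \<le> \<delta>" "0 \<le> s"
  shows "hausdorff_pre s \<delta> A \<le> ennreal (real (card S) * (2 * r) powr s)"
proof -
  obtain h where h: "bij_betw h {0..<card S} S"
    using ex_bij_betw_nat_finite[OF \<open>finite S\<close>] by blast
  define F where "F i = (if i < card S then ball (h i) r else {})" for i
  have "A \<subseteq> (\<Union>i. F i)"
    using cover h by (force simp: F_def bij_betw_def)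
  moreover have "bounded (F i) \<and> diameter (F i) \<le> \<delta>" for i
    using diameter_ball_le[of r "h i"] assms by (auto simp: F_def)
  ultimately have "hausdorff_pre s \<delta> A \<le> (\<Sum>i. ennreal (diam_pow s (F i)))"
    unfolding hausdorff_pre_def by (intro INF_lower) auto
  also have "\<dots> = (\<Sum>i<card S. ennreal (diam_pow s (F i)))"
    by (rule suminf_finite) (auto simp: F_def diam_pow_def)
  also have "\<dots> \<le> (\<Sum>i<card S. ennreal ((2 * r) powr s))"
  proof (intro sum_mono ennreal_leI)
    fix i
    assume "i \<in> {..<card S}"
    then show "diam_pow s (F i) \<le> (2 * r) powr s"
      using diameter_ball_le[of r "h i"] diameter_ge_0[of "ball (h i) r"] assms
      by (auto simp: F_def diam_pow_def intro: powr_mono2)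
  qed
  also have "\<dots> = ennreal (real (card S) * (2 * r) powr s)"
    by (simp add: ennreal_mult ennreal_of_nat_eq_real_of_nat)
  finally show ?thesis .
qed

lemma hausdorff_pre_UN_le_suminf:
  fixes B :: "nat \<Rightarrow> 'a::metric_space set" and e :: "nat \<Rightarrow> ennreal"
  assumes cover: "A \<subseteq> (\<Union>i. B i)" and less: "\<And>i. hausdorff_pre s \<delta> (B i) < e i"
  shows "hausdorff_pre s \<delta> A \<le> (\<Sum>i. e i)"
proof -
  have "\<exists>F. B i \<subseteq> (\<Union>j. F j) \<and> (\<forall>j. bounded (F j) \<and> diameter (F j) \<le> \<delta>) \<and>
      (\<Sum>j. ennreal (diam_pow s (F j))) < e i" for i
    using less[of i] unfolding hausdorff_pre_def INF_less_iff by blast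
  then obtain F where F_cover: "\<And>i. B i \<subseteq> (\<Union>j. F i j)"
    and F_diam: "\<And>i j. bounded (F i j) \<and> diameter (F i j) \<le> \<delta>"
    and F_sum: "\<And>i. (\<Sum>j. ennreal (diam_pow s (F i j))) < e i"
    by metis
  define G where "G m = F (fst (prod_decode m)) (snd (prod_decode m))" for m
  have "A \<subseteq> (\<Union>m. G m)"
  proof
    fix x
    assume "x \<in> A"
    then obtain i j where "x \<in> F i j"
      using cover F_cover by blast
    then have "x \<in> G (prod_encode (i, j))"
      by (simp add: G_def)
    then show "x \<in> (\<Union>m. G m)"
      by blast
  qed
  then have "hausdorff_pre s \<delta> A \<le> (\<Sum>m. ennreal (diam_pow s (G m)))"
    unfolding hausdorff_pre_def using F_diam by (intro INF_lower) (auto simp: G_def)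
  also have "\<dots> = (\<Sum>i. \<Sum>j. ennreal (diam_pow s (F i j)))"
    using suminf_ennreal_2dimen[of "\<lambda>i. \<Sum>j. ennreal (diam_pow s (F i j))"
        "\<lambda>(i, j). ennreal (diam_pow s (F i j))"]
    by (simp add: G_def case_prod_beta)
  also have "\<dots> \<le> (\<Sum>i. e i)"
    using F_sum by (intro suminf_le less_imp_le) auto
  finally show ?thesis .
qed

lemma ennreal_eq_0_of_le_epsilon:
  fixes x :: ennreal
  assumes "\<And>\<epsilon>. 0 < \<epsilon> \<Longrightarrow> x \<le> ennreal \<epsilon>"
  shows "x = 0"
proof -
  have "x \<le> 0"
    by (rule ennreal_le_epsilon) (simp add: assms)
  then show ?thesis
    by simp
qed

lemma hausdorff_pre_null_UN:
  fixes B :: "nat \<Rightarrow> 'a::metric_space set"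
  assumes cover: "A \<subseteq> (\<Union>i. B i)" and null: "\<And>i. hausdorff_pre s \<delta> (B i) = 0"
  shows "hausdorff_pre s \<delta> A = 0"
proof (rule ennreal_eq_0_of_le_epsilon)
  fix \<epsilon> :: real
  assume "0 < \<epsilon>"
  define e where "e = (\<lambda>i. \<epsilon> * (1/2) ^ Suc i)"
  have "e sums \<epsilon>"
    unfolding e_def using sums_mult[OF power_half_series, of \<epsilon>] by simp
  then have "(\<lambda>i. ennreal (e i)) sums ennreal \<epsilon>"
    using \<open>0 < \<epsilon>\<close> by (simp add: e_def)
  moreover have "hausdorff_pre s \<delta> A \<le> (\<Sum>i. ennreal (e i))"
    using null \<open>0 < \<epsilon>\<close> by (intro hausdorff_pre_UN_le_suminf[OF cover]) (simp add: e_def)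
  ultimately show "hausdorff_pre s \<delta> A \<le> ennreal \<epsilon>"
    by (simp add: sums_iff)
qed

lemma hausdorff_dim_le_of_hausdorff_pre_null:
  assumes "0 \<le> n" and null: "\<And>s \<delta>. n < s \<Longrightarrow> 0 < \<delta> \<Longrightarrow> hausdorff_pre s \<delta> A = 0"
  shows "hausdorff_dim A \<le> ereal n"
proof (rule dense_ge)
  fix x
  assume "ereal n < x"
  then obtain s where s: "ereal n < ereal s" "ereal s < x"
    using ereal_dense2 by blast
  then have "hausdorff_measure s A = 0"
    using null by (simp add: hausdorff_measure_def)
  then have "hausdorff_dim A \<le> ereal s"
    unfolding hausdorff_dim_def using s \<open>0 \<le> n\<close> by (intro INF_lower) auto
  with s show "hausdorff_dim A \<le> x"
    by simp
qed

lemma hausdorff_pre_ball_le: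
  fixes mu :: "'a::metric_space measure"
  assumes sets: "sets mu = sets borel" and finite: "emeasure mu (ball y (2 * \<rho>)) < \<infinity>"
    and "0 < c" and lower: "lower_volume_growth mu n \<rho> c y"
    and r: "0 < r" "r \<le> \<rho>" "2 * r \<le> \<delta>" and "0 \<le> s"
  shows "hausdorff_pre s \<delta> (ball y \<rho>)
    \<le> ennreal (measure mu (ball y (2 * \<rho>)) * (2 powr (n + s) / c) * r powr (s - n))"
proof -
  define M where "M = measure mu (ball y (2 * \<rho>))"
  obtain S where S: "finite S" "ball y \<rho> \<subseteq> (\<Union>x\<in>S. ball x r)"
    and card: "real (card S) * (c * (r/2) powr n) \<le> M"
    using finite_ball_cover_of_measure_lower_bound[OF sets finite, of "c * (r/2) powr n" r]
      lower r \<open>0 < c\<close> unfolding M_def lower_volume_growth_def by auto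
  have "(2 * r) powr s = (r/2) powr n * 2 powr (n + s) * r powr (s - n)"
    using r by (simp add: powr_mult powr_divide powr_add powr_diff)
  then have "real (card S) * (2 * r) powr s
      = real (card S) * (c * (r/2) powr n) * (2 powr (n + s) / c) * r powr (s - n)"
    using \<open>0 < c\<close> by simp
  also have "\<dots> \<le> M * (2 powr (n + s) / c) * r powr (s - n)"
    using card \<open>0 < c\<close> by (intro mult_right_mono) auto
  finally show ?thesis
    using hausdorff_pre_le_finite_ball_cover[OF S r(1) r(3) \<open>0 \<le> s\<close>]
    unfolding M_def by (meson ennreal_leI order_trans)
qed

lemma hausdorff_pre_ball_null:
  fixes mu :: "'a::metric_space measure"
  assumes sets: "sets mu = sets borel" and finite: "emeasure mu (ball y (2 * \<rho>)) < \<infinity>"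
    and "0 < c" and lower: "lower_volume_growth mu n \<rho> c y"
    and "0 < \<rho>" "0 \<le> n" "n < s" "0 < \<delta>"
  shows "hausdorff_pre s \<delta> (ball y \<rho>) = 0"
proof (rule ennreal_eq_0_of_le_epsilon)
  fix \<epsilon> :: real
  assume "0 < \<epsilon>"
  define M where "M = measure mu (ball y (2 * \<rho>))"
  define A where "A = (M + 1) * (2 powr (n + s) / c)"
  have A: "0 < A"
    using \<open>0 < c\<close> by (simp add: A_def M_def add_nonneg_pos)
  define r where "r = min (min \<rho> (\<delta>/2)) ((\<epsilon> / A) powr (1 / (s - n)))"
  have r: "0 < r" "r \<le> \<rho>" "2 * r \<le> \<delta>"
    using \<open>0 < \<rho>\<close> \<open>0 < \<delta>\<close> \<open>0 < \<epsilon>\<close> A by (auto simp: r_def)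
  have "r powr (s - n) \<le> ((\<epsilon> / A) powr (1 / (s - n))) powr (s - n)"
    using r \<open>n < s\<close> by (intro powr_mono2) (auto simp: r_def)
  also have "\<dots> = \<epsilon> / A"
    using A \<open>0 < \<epsilon>\<close> \<open>n < s\<close> by (simp add: powr_powr)
  finally have r_small: "r powr (s - n) \<le> \<epsilon> / A" .
  have "M * (2 powr (n + s) / c) * r powr (s - n) \<le> A * r powr (s - n)"
    unfolding A_def using \<open>0 < c\<close> by (intro mult_right_mono) auto
  also have "\<dots> \<le> \<epsilon>"
    using r_small A by (simp add: field_simps)
  finally show "hausdorff_pre s \<delta> (ball y \<rho>) \<le> ennreal \<epsilon>"
    using hausdorff_pre_ball_le[OF sets finite \<open>0 < c\<close> lower r] \<open>0 \<le> n\<close> \<open>n < s\<close>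
    unfolding M_def by (meson ennreal_leI less_imp_le order_trans)
qed

lemma connected_step_closed_eq_UNIV:
  fixes W :: "'a::metric_space set"
  assumes connected: "connected (UNIV :: 'a set)" and "0 < r" "x \<in> W"
    and step_closed: "\<And>x y. x \<in> W \<Longrightarrow> dist x y < r \<Longrightarrow> y \<in> W"
  shows "W = UNIV"
proof -
  have "open W"
    unfolding open_contains_ball using step_closed \<open>0 < r\<close> by auto
  moreover have "open (- W)"
    unfolding open_contains_ball using step_closed \<open>0 < r\<close> by (auto simp: dist_commute)
  ultimately show ?thesis
    using connectedD[OF connected, of W "- W"] \<open>x \<in> W\<close> by auto
qed

lemma countable_ball_cover_of_connected:
  fixes \<rho> :: real
  assumes connected: "connected (UNIV :: 'a::metric_space set)" and "0 < \<rho>"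
    and finite_cover: "\<And>y::'a::metric_space. \<exists>S. finite S \<and> ball y \<rho> \<subseteq> (\<Union>x\<in>S. ball x (\<rho>/2))"
  obtains d :: "nat \<Rightarrow> 'a::metric_space" where "(\<Union>i. ball (d i) (\<rho>/2)) = UNIV"
proof -
  obtain \<Phi> :: "'a \<Rightarrow> 'a set" where \<Phi>_finite: "\<And>y. finite (\<Phi> y)"
    and \<Phi>_cover: "\<And>y. ball y \<rho> \<subseteq> (\<Union>x\<in>\<Phi> y. ball x (\<rho>/2))"
    using finite_cover by metis
  fix x\<^sub>0 :: 'a
  define step where "step A = \<Union>(\<Phi> ` A)" for A
  define D where "D = (\<Union>m. (step ^^ m) {x\<^sub>0})"
  have "finite ((step ^^ m) {x\<^sub>0})" for m
    by (induction m) (auto simp: step_def \<Phi>_finite)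
  then have "countable D"
    by (auto simp: D_def intro: countable_finite)
  have "x\<^sub>0 \<in> D"
    unfolding D_def by (auto intro: exI[of _ 0])
  have \<Phi>_D: "\<Phi> d \<subseteq> D" if "d \<in> D" for d
  proof -
    obtain m where "d \<in> (step ^^ m) {x\<^sub>0}"
      using \<open>d \<in> D\<close> by (auto simp: D_def)
    then have "\<Phi> d \<subseteq> (step ^^ Suc m) {x\<^sub>0}"
      by (auto simp: step_def)
    then show ?thesis
      unfolding D_def by blast
  qed
  define W where "W = (\<Union>d\<in>D. ball d (\<rho>/2))"
  have "W = UNIV"
  proof (rule connected_step_closed_eq_UNIV[OF connected, of "\<rho>/2"])
    show "x\<^sub>0 \<in> W"
      using \<open>x\<^sub>0 \<in> D\<close> \<open>0 < \<rho>\<close> unfolding W_def by (intro UN_I[of x\<^sub>0]) auto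
    fix x y
    assume "x \<in> W" "dist x y < \<rho>/2"
    then obtain d where "d \<in> D" "y \<in> ball d \<rho>"
      unfolding W_def by (auto simp: dist_commute) metric
    then show "y \<in> W"
      using \<Phi>_cover[of d] \<Phi>_D unfolding W_def by blast
  qed (use \<open>0 < \<rho>\<close> in simp)
  moreover have "range (from_nat_into D) = D"
    using \<open>x\<^sub>0 \<in> D\<close> \<open>countable D\<close> by (intro range_from_nat_into) auto
  ultimately have "(\<Union>d\<in>range (from_nat_into D). ball d (\<rho>/2)) = UNIV"
    by (simp add: W_def)
  then show ?thesis
    by (intro that[of "from_nat_into D"]) simp
qed

lemma length_space_path_connected:
  assumes "length_space TYPE('a::metric_space)"
  shows "path_connected (UNIV :: 'a set)"
  unfolding path_connected_def
proof (intro ballI)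
  fix x y :: 'a
  let ?curves = "{g :: real \<Rightarrow> 'a. continuous_on {0..1} g \<and> g 0 = x \<and> g 1 = y}"
  have "ereal (dist x y) = (INF g \<in> ?curves. curve_length g)"
    using assms by (simp add: length_space_def)
  then have "?curves \<noteq> {}"
    by (intro notI) (simp add: top_ereal_def)
  then show "\<exists>g. path g \<and> path_image g \<subseteq> UNIV \<and> pathstart g = x \<and> pathfinish g = y"
    by (auto simp: path_def pathstart_def pathfinish_def)
qed

lemma hausdorff_dim_le_of_lower_volume_growth:
  fixes mu :: "'a::metric_space measure"
  assumes sets: "sets mu = sets borel" and finite: "\<And>x r. emeasure mu (ball x r) < \<infinity>"
    and connected: "connected (UNIV :: 'a set)" and "0 < \<rho>" "0 \<le> n"
    and lower: "\<And>y. \<exists>c>0. lower_volume_growth mu n \<rho> c y"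
  shows "hausdorff_dim (UNIV :: 'a set) \<le> ereal n"
proof -
  have local_cover: "\<exists>S. finite S \<and> ball y \<rho> \<subseteq> (\<Union>x\<in>S. ball x (\<rho>/2))" for y :: 'a
  proof -
    obtain c where "0 < c" and c: "lower_volume_growth mu n \<rho> c y"
      using lower by blast
    obtain S where "finite S" "ball y \<rho> \<subseteq> (\<Union>x\<in>S. ball x (\<rho>/2))"
      by (rule finite_ball_cover_of_measure_lower_bound[OF sets finite,
            where L = "c * (\<rho>/2/2) powr n" and r = "\<rho>/2"])
        (use c \<open>0 < c\<close> \<open>0 < \<rho>\<close> in \<open>auto simp: lower_volume_growth_def\<close>)
    then show ?thesis
      by blast
  qed
  obtain d :: "nat \<Rightarrow> 'a" where cover: "(\<Union>i. ball (d i) (\<rho>/2)) = UNIV"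
    using countable_ball_cover_of_connected[OF connected \<open>0 < \<rho>\<close> local_cover] by blast
  show ?thesis
  proof (rule hausdorff_dim_le_of_hausdorff_pre_null[OF \<open>0 \<le> n\<close>])
    fix s \<delta> :: real
    assume "n < s" "0 < \<delta>"
    show "hausdorff_pre s \<delta> (UNIV :: 'a set) = 0"
    proof (rule hausdorff_pre_null_UN)
      have "(\<Union>i. ball (d i) (\<rho>/2)) \<subseteq> (\<Union>i. ball (d i) \<rho>)"
        using \<open>0 < \<rho>\<close> by (intro UN_mono subset_ball) auto
      then show "UNIV \<subseteq> (\<Union>i. ball (d i) \<rho>)"
        by (simp only: cover)
      show "hausdorff_pre s \<delta> (ball (d i) \<rho>) = 0" for i
      proof -
        obtain c where "0 < c" and c: "lower_volume_growth mu n \<rho> c (d i)"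
          using lower by blast
        show ?thesis
          by (rule hausdorff_pre_ball_null[OF sets finite \<open>0 < c\<close> c]) fact+
      qed
    qed
  qed
qed

theorem proposition3p8:
  fixes mu :: "'a::metric_space measure" and k n C :: real
  assumes "metric_measure_space mu"
    and "n \<ge> 1" and "C \<ge> 1"
    and "BG mu k n C"
  shows "hausdorff_dim (UNIV :: 'a set) \<le> ereal n"
proof -
  obtain \<rho> where "0 < \<rho>" and lower: "\<And>y. \<exists>c>0. lower_volume_growth mu n \<rho> c y"
    using BG_local_volume_lower_bound[OF assms(1,4,2)] \<open>C \<ge> 1\<close> by auto
  have "connected (UNIV :: 'a set)"
    using assms(1) unfolding metric_measure_space_def
    by (intro path_connected_imp_connected length_space_path_connected) simp
  then show ?thesis
    using hausdorff_dim_le_of_lower_volume_growth[OF metric_measure_space_sets_eq[OF assms(1)]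
        metric_measure_space_emeasure_ball_finite[OF assms(1)] _ \<open>0 < \<rho>\<close> _ lower] \<open>n \<ge> 1\<close>
    by simp
qed

end
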